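(* Let $x\in V(D^+)\setminus\{s\}$ and $y\in C(x)$. Then there are two internally disjoint directed paths in $D^+$, one from $I_s(x)$ to $x$ and one from $y$ to $x$.
   Context: $G=(V,E,w)$ is a simple, connected, undirected graph with positive edge lengths, $s,t\in V$. $D$ is the union of all shortest $st$-paths of $G$, and $D^+$ is the directed acyclic graph obtained from $D$ by orienting every edge toward $t$. $x\prec y$ means $x$ is an ancestor of $y$ in $D^+$ (a directed path of positive length from $x$ to $y$ exists). For $x\neq s$, $v\neq x$ is an $s$-dominator of $x$ if every directed path from $s$ to $x$ in $D^+$ contains $v$, and $I_s(x)$ is the $s$-dominator of $x$ closest to $x$ (every other $s$-dominator of $x$ is an $s$-dominator of $I_s(x)$). For $x\neq s$, $C(x)=\{v\in V(D^+): I_s(x)\prec v\prec x\}$. Two paths are internally disjoint if they share no vertex other than their endpoints. *)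

theory Defs
  imports Complex_Main
begin

definition simple_graph :: "'a set \<Rightarrow> 'a set set \<Rightarrow> bool" where
  "simple_graph V E \<longleftrightarrow> finite V \<and> (\<forall>e\<in>E. \<exists>u v. e = {u, v} \<and> u \<noteq> v \<and> u \<in> V \<and> v \<in> V)"

definition upath :: "'a set \<Rightarrow> 'a set set \<Rightarrow> 'a list \<Rightarrow> bool" where
  "upath V E p \<longleftrightarrow> p \<noteq> [] \<and> distinct p \<and> set p \<subseteq> V \<and>
     (\<forall>i < length p - 1. {p ! i, p ! Suc i} \<in> E)"

definition connected_graph :: "'a set \<Rightarrow> 'a set set \<Rightarrow> bool" where
  "connected_graph V E \<longleftrightarrow> (\<forall>u\<in>V. \<forall>v\<in>V. \<exists>p. upath V E p \<and> hd p = u \<and> last p = v)"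

definition plen :: "('a set \<Rightarrow> real) \<Rightarrow> 'a list \<Rightarrow> real" where
  "plen w p = (\<Sum>i < length p - 1. w {p ! i, p ! Suc i})"

definition shortest_path :: "'a set \<Rightarrow> 'a set set \<Rightarrow> ('a set \<Rightarrow> real) \<Rightarrow> 'a \<Rightarrow> 'a \<Rightarrow> 'a list \<Rightarrow> bool" where
  "shortest_path V E w s t p \<longleftrightarrow> upath V E p \<and> hd p = s \<and> last p = t \<and>
     (\<forall>q. upath V E q \<and> hd q = s \<and> last q = t \<longrightarrow> plen w p \<le> plen w q)"

definition DV :: "'a set \<Rightarrow> 'a set set \<Rightarrow> ('a set \<Rightarrow> real) \<Rightarrow> 'a \<Rightarrow> 'a \<Rightarrow> 'a set" where
  "DV V E w s t = \<Union>{set p | p. shortest_path V E w s t p}"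

definition DA :: "'a set \<Rightarrow> 'a set set \<Rightarrow> ('a set \<Rightarrow> real) \<Rightarrow> 'a \<Rightarrow> 'a \<Rightarrow> ('a \<times> 'a) set" where
  "DA V E w s t = {(p ! i, p ! Suc i) | p i. shortest_path V E w s t p \<and> i < length p - 1}"

definition dpath :: "'a set \<Rightarrow> 'a set set \<Rightarrow> ('a set \<Rightarrow> real) \<Rightarrow> 'a \<Rightarrow> 'a \<Rightarrow> 'a list \<Rightarrow> bool" where
  "dpath V E w s t p \<longleftrightarrow> p \<noteq> [] \<and> distinct p \<and> set p \<subseteq> DV V E w s t \<and>
     (\<forall>i < length p - 1. (p ! i, p ! Suc i) \<in> DA V E w s t)"

definition anc :: "'a set \<Rightarrow> 'a set set \<Rightarrow> ('a set \<Rightarrow> real) \<Rightarrow> 'a \<Rightarrow> 'a \<Rightarrow> 'a \<Rightarrow> 'a \<Rightarrow> bool" where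
  "anc V E w s t x y \<longleftrightarrow> (\<exists>p. dpath V E w s t p \<and> hd p = x \<and> last p = y \<and> length p \<ge> 2)"

definition sdom :: "'a set \<Rightarrow> 'a set set \<Rightarrow> ('a set \<Rightarrow> real) \<Rightarrow> 'a \<Rightarrow> 'a \<Rightarrow> 'a \<Rightarrow> 'a \<Rightarrow> bool" where
  "sdom V E w s t v x \<longleftrightarrow> v \<noteq> x \<and>
     (\<forall>p. dpath V E w s t p \<and> hd p = s \<and> last p = x \<longrightarrow> v \<in> set p)"

definition idom :: "'a set \<Rightarrow> 'a set set \<Rightarrow> ('a set \<Rightarrow> real) \<Rightarrow> 'a \<Rightarrow> 'a \<Rightarrow> 'a \<Rightarrow> 'a" where
  "idom V E w s t x = (THE v. sdom V E w s t v x \<and>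
      (\<forall>u. sdom V E w s t u x \<and> u \<noteq> v \<longrightarrow> sdom V E w s t u v))"

definition Cset :: "'a set \<Rightarrow> 'a set set \<Rightarrow> ('a set \<Rightarrow> real) \<Rightarrow> 'a \<Rightarrow> 'a \<Rightarrow> 'a \<Rightarrow> 'a set" where
  "Cset V E w s t x = {v \<in> DV V E w s t. anc V E w s t (idom V E w s t x) v \<and> anc V E w s t v x}"

definition internally_disjoint :: "'a list \<Rightarrow> 'a list \<Rightarrow> bool" where
  "internally_disjoint P Q \<longleftrightarrow> (\<forall>v \<in> set P \<inter> set Q. v \<in> {hd P, last P} \<and> v \<in> {hd Q, last Q})"

end

theory Submission
  imports Defs
begin

text \<open>Since all weights are positive (the only hypothesis on \<open>G\<close> that is used), the distance from
  \<open>s\<close> increases strictly along every arc of \<open>D\<^sup>+\<close>. Hence \<open>D\<^sup>+\<close> is acyclic, directed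
  walks are paths, and \<open>I\<^sub>s(x)\<close> is the dominator of \<open>x\<close> farthest from \<open>s\<close>.

  The two paths are built backwards along a path \<open>y = y\<^sub>0, y\<^sub>1, \<dots>, y\<^sub>k = x\<close>. Given
  disjoint paths \<open>P\<close> from \<open>I\<^sub>s(x)\<close> and \<open>Q\<close> from \<open>y\<^sub>1\<close>, either \<open>y\<^sub>0 \<notin> P\<close> and
  \<open>P, y\<^sub>0Q\<close> works, or \<open>y\<^sub>0\<close> splits \<open>P\<close>. In the latter case some \<open>I\<^sub>s(x)\<close>-\<open>x\<close> path
  \<open>R\<close> avoids \<open>y\<^sub>0\<close>, for otherwise \<open>y\<^sub>0\<close> would dominate \<open>x\<close> and hence \<open>I\<^sub>s(x)\<close>,
  although it is farther from \<open>s\<close>. Following \<open>R\<close> until it first meets \<open>Q\<close> or the part of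
  \<open>P\<close> after \<open>y\<^sub>0\<close> and continuing along the path met, while \<open>y\<^sub>0\<close> keeps the other one,
  gives the new pair.\<close>

lemma upath_iff_successively:
  "upath V E p \<longleftrightarrow> p \<noteq> [] \<and> distinct p \<and> set p \<subseteq> V \<and> successively (\<lambda>a b. {a, b} \<in> E) p"
  by (auto simp: upath_def successively_conv_nth less_diff_conv)

lemma dpath_iff_successively:
  "dpath V E w s t p \<longleftrightarrow>
     p \<noteq> [] \<and> distinct p \<and> set p \<subseteq> DV V E w s t \<and> successively (\<lambda>a b. (a, b) \<in> DA V E w s t) p"
  by (auto simp: dpath_def successively_conv_nth less_diff_conv)

lemma plen_Nil [simp]: "plen w [] = 0"
  and plen_singleton [simp]: "plen w [a] = 0"
  by (simp_all add: plen_def)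

lemma plen_Cons_Cons [simp]: "plen w (a # b # xs) = w {a, b} + plen w (b # xs)"
  unfolding plen_def by (simp del: sum.lessThan_Suc add: sum.lessThan_Suc_shift)

lemma plen_append: "plen w (xs @ y # ys) = plen w (xs @ [y]) + plen w (y # ys)"
  by (induction xs rule: induct_list012) auto

lemma plen_glue:
  assumes "xs \<noteq> []" "ys \<noteq> []" "last xs = hd ys"
  shows "plen w (xs @ tl ys) = plen w xs + plen w ys"
proof -
  obtain xs' y where xs: "xs = xs' @ [y]" using assms(1) by (cases xs rule: rev_exhaust) auto
  obtain ys' where "ys = y # ys'" using assms(2,3) xs by (cases ys) auto
  then show ?thesis using xs plen_append[of w xs' y ys'] by simp
qed

lemma plen_nonneg:
  "successively R xs \<Longrightarrow> (\<And>a b. R a b \<Longrightarrow> 0 \<le> w {a, b}) \<Longrightarrow> 0 \<le> plen w xs"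
  by (induction xs rule: induct_list012) (auto intro: add_nonneg_nonneg)

lemma sorted_wrt_hd:
  "sorted_wrt R xs \<Longrightarrow> x \<in> set xs \<Longrightarrow> x \<noteq> hd xs \<Longrightarrow> R (hd xs) x"
  by (cases xs) auto

lemma sorted_wrt_last:
  "sorted_wrt R xs \<Longrightarrow> x \<in> set xs \<Longrightarrow> x \<noteq> last xs \<Longrightarrow> R x (last xs)"
  by (induction xs) (auto split: if_splits)

lemma successively_append_Cons_iff:
  "successively R (xs @ y # ys) \<longleftrightarrow> successively R (xs @ [y]) \<and> successively R (y # ys)"
  by (induction xs rule: induct_list012) auto

lemma shortcut_walk:
  assumes "successively R xs" "xs \<noteq> []" "\<And>a b. R a b \<Longrightarrow> 0 \<le> w {a, b}"
  shows "\<exists>ys. ys \<noteq> [] \<and> distinct ys \<and> hd ys = hd xs \<and> last ys = last xs \<and> set ys \<subseteq> set xs \<and>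
    successively R ys \<and> plen w ys \<le> plen w xs"
  using assms(1,2)
proof (induction "length xs" arbitrary: xs rule: less_induct)
  case less
  show ?case
  proof (cases "distinct xs")
    case True
    then show ?thesis using less.prems by blast
  next
    case False
    then obtain as v bs cs where "xs = as @ [v] @ bs @ [v] @ cs"
      using not_distinct_decomp by blast
    then have xs: "xs = as @ v # bs @ v # cs" by simp
    define xs' where "xs' = as @ v # cs"
    have "successively R (as @ [v])" "successively R ((v # bs) @ v # cs)"
      using less.prems(1) successively_append_Cons_iff[of R as v "bs @ v # cs"] unfolding xs by simp_all
    then have walks: "successively R (as @ [v])" "successively R ((v # bs) @ [v])" "successively R (v # cs)"
      using successively_append_Cons_iff[of R "v # bs" v cs] by blast+
    have "plen w xs = plen w (as @ [v]) + plen w (v # bs @ [v]) + plen w (v # cs)"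
      unfolding xs using plen_append[of w as v "bs @ v # cs"] plen_append[of w "v # bs" v cs] by simp
    moreover have "0 \<le> plen w (v # bs @ [v])" using plen_nonneg[of R "(v # bs) @ [v]" w] walks(2) assms(3) by simp
    ultimately have "plen w xs' \<le> plen w xs" unfolding xs'_def using plen_append[of w as v cs] by simp
    moreover have "successively R xs'"
      using walks successively_append_Cons_iff[of R as v cs] unfolding xs'_def by simp
    moreover have "hd xs' = hd xs" "last xs' = last xs" "set xs' \<subseteq> set xs"
      unfolding xs'_def xs by (cases as; auto)+
    moreover obtain ys where "ys \<noteq> []" "distinct ys" "hd ys = hd xs'" "last ys = last xs'"
      "set ys \<subseteq> set xs'" "successively R ys" "plen w ys \<le> plen w xs'"
      using less.hyps[of xs'] \<open>successively R xs'\<close> unfolding xs'_def xs by auto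
    ultimately show ?thesis by (intro exI[of _ ys]) auto
  qed
qed

locale shortest_path_dag =
  fixes V :: "'a set" and E :: "'a set set" and w :: "'a set \<Rightarrow> real" and s t :: 'a
  assumes weight_pos: "\<And>e. e \<in> E \<Longrightarrow> 0 < w e"
begin

abbreviation "SP \<equiv> shortest_path V E w s t"
abbreviation "VD \<equiv> DV V E w s t"
abbreviation arc :: "'a \<Rightarrow> 'a \<Rightarrow> bool" where "arc a b \<equiv> (a, b) \<in> DA V E w s t"
abbreviation "dp \<equiv> dpath V E w s t"
abbreviation "ancestor \<equiv> anc V E w s t"
abbreviation "dominates \<equiv> sdom V E w s t"
abbreviation "I \<equiv> idom V E w s t"

definition sdist :: "'a \<Rightarrow> real" where
  "sdist v = (INF q \<in> {q. upath V E q \<and> hd q = s \<and> last q = v}. plen w q)"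

lemma weight_nonneg: "{a, b} \<in> E \<Longrightarrow> 0 \<le> w {a, b}"
  using weight_pos less_imp_le by blast

lemma shortest_path_dpath: "SP p \<Longrightarrow> dp p"
  unfolding dpath_def DV_def DA_def by (auto simp: shortest_path_def upath_def)

lemma arc_on_shortest_path:
  assumes "arc a b"
  obtains as bs where "SP (as @ a # b # bs)"
proof -
  obtain p i where p: "SP p" "i < length p - 1" "a = p ! i" "b = p ! Suc i"
    using assms unfolding DA_def by blast
  then have "drop i p = a # b # drop (Suc (Suc i)) p"
    by (simp add: Cons_nth_drop_Suc)
  then have "p = take i p @ a # b # drop (Suc (Suc i)) p"
    by (metis append_take_drop_id)
  then show ?thesis using p(1) that by metis
qed

lemma sdist_shortest_path_prefix:
  assumes sp: "SP (as @ v # bs)"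
  shows "sdist v = plen w (as @ [v])"
proof -
  have p: "upath V E (as @ v # bs)" "hd (as @ v # bs) = s" "last (as @ v # bs) = t"
    and min: "\<And>q. upath V E q \<Longrightarrow> hd q = s \<Longrightarrow> last q = t \<Longrightarrow> plen w (as @ v # bs) \<le> plen w q"
    using sp unfolding shortest_path_def by auto
  have walks: "successively (\<lambda>a b. {a, b} \<in> E) (as @ [v])" "successively (\<lambda>a b. {a, b} \<in> E) (v # bs)"
    using p(1) successively_append_Cons_iff[of _ as v bs] unfolding upath_iff_successively by blast+
  have prefix: "upath V E (as @ [v])" "hd (as @ [v]) = s"
    using p(1,2) walks(1) by (auto simp: upath_iff_successively hd_append)
  have "plen w (as @ [v]) \<le> plen w q" if q: "upath V E q" "hd q = s" "last q = v" for q
  proof (rule ccontr)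
    assume shorter: "\<not> plen w (as @ [v]) \<le> plen w q"
    have "q \<noteq> []" using q(1) by (simp add: upath_iff_successively)
    have walk: "successively (\<lambda>a b. {a, b} \<in> E) (q @ bs)"
      using q walks(2) \<open>q \<noteq> []\<close>
      by (auto simp: upath_iff_successively successively_append_iff successively_Cons)
    have ends: "q @ bs \<noteq> []" "hd (q @ bs) = s" "last (q @ bs) = t" "set (q @ bs) \<subseteq> V"
      using q p \<open>q \<noteq> []\<close> by (auto simp: upath_iff_successively)
    obtain U where U: "U \<noteq> []" "distinct U" "hd U = s" "last U = t" "set U \<subseteq> set (q @ bs)"
      "successively (\<lambda>a b. {a, b} \<in> E) U" "plen w U \<le> plen w (q @ bs)"
      using shortcut_walk[of _ _ w, OF walk ends(1) weight_nonneg] ends(2,3) by blast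
    have "upath V E U" using U ends(4) by (auto simp: upath_iff_successively)
    have "plen w (q @ bs) = plen w q + plen w (v # bs)"
      using plen_glue[of q "v # bs" w] q \<open>q \<noteq> []\<close> by simp
    moreover have "plen w (as @ v # bs) = plen w (as @ [v]) + plen w (v # bs)"
      by (rule plen_append)
    ultimately show False using min[OF \<open>upath V E U\<close> U(3,4)] U(7) shorter by linarith
  qed
  then show ?thesis
    unfolding sdist_def using prefix by (intro cInf_eq_minimum) auto
qed

lemma sdist_arc_less:
  assumes "arc a b"
  shows "sdist a < sdist b"
proof -
  obtain as bs where sp: "SP (as @ a # b # bs)"
    using assms by (rule arc_on_shortest_path)
  then have "{a, b} \<in> E"
    using successively_append_Cons_iff[of _ as a "b # bs"]
    by (auto simp: shortest_path_def upath_iff_successively)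
  moreover have "sdist b = plen w ((as @ [a]) @ [b])"
    using sdist_shortest_path_prefix[of "as @ [a]" b bs] sp by simp
  moreover have "sdist a = plen w (as @ [a])"
    using sdist_shortest_path_prefix[of as a "b # bs"] sp by simp
  ultimately show ?thesis
    using plen_append[of w as a "[b]"] weight_pos by simp
qed

lemma arc_in_DV: "arc a b \<Longrightarrow> a \<in> VD \<and> b \<in> VD"
  by (erule arc_on_shortest_path) (auto simp: DV_def)

lemma dpath_sorted_sdist: "dp p \<Longrightarrow> sorted_wrt (\<lambda>a b. sdist a < sdist b) p"
  unfolding dpath_iff_successively
  by (subst successively_conv_sorted_wrt[symmetric])
     (auto simp: transp_def elim: successively_mono intro: sdist_arc_less)

lemma dpath_prefix: "dp (xs @ ys) \<Longrightarrow> xs \<noteq> [] \<Longrightarrow> dp xs"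
  and dpath_suffix: "dp (xs @ ys) \<Longrightarrow> ys \<noteq> [] \<Longrightarrow> dp ys"
  by (auto simp: dpath_iff_successively successively_append_iff)

text \<open>The vertices of \<open>xs\<close> lie at most as far from \<open>s\<close> as \<open>hd ys\<close> and those of \<open>tl ys\<close> strictly
  farther, so concatenation at a common vertex needs no shortcutting.\<close>
lemma dpath_glue:
  assumes xs: "dp xs" and ys: "dp ys" and "last xs = hd ys"
  shows "dp (xs @ tl ys)"
proof -
  have "sdist v \<le> sdist (hd ys)" if "v \<in> set xs" for v
    using sorted_wrt_last[OF dpath_sorted_sdist[OF xs] that] \<open>last xs = hd ys\<close> by fastforce
  moreover have "sdist (hd ys) < sdist v" if "v \<in> set (tl ys)" for v
    using sorted_wrt_hd[OF dpath_sorted_sdist[OF ys]] ys that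
    by (cases ys) (auto simp: dpath_iff_successively)
  ultimately have "set xs \<inter> set (tl ys) = {}" by fastforce
  moreover have "successively (\<lambda>a b. arc a b) (tl ys)" "tl ys \<noteq> [] \<Longrightarrow> arc (last xs) (hd (tl ys))"
    using ys \<open>last xs = hd ys\<close> by (cases ys; auto simp: dpath_iff_successively successively_Cons)+
  ultimately show ?thesis
    using xs ys by (cases ys) (auto simp: dpath_iff_successively successively_append_iff)
qed

lemma arc_dpath: "arc a b \<Longrightarrow> dp [a, b]"
  using arc_in_DV sdist_arc_less[of a b] by (auto simp: dpath_iff_successively)

lemma ancestor_iff_dpath: "ancestor a b \<longleftrightarrow> (\<exists>p. dp p \<and> hd p = a \<and> last p = b \<and> a \<noteq> b)"
proof
  assume "ancestor a b"
  then obtain p where p: "dp p" "hd p = a" "last p = b" "2 \<le> length p"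
    unfolding anc_def by blast
  then obtain c d q where pcdq: "p = c # d # q" by (metis One_nat_def Suc_1 Suc_le_length_iff)
  then have "b \<in> set (d # q)"
    using p(3) last_in_set[of "d # q"] by simp
  moreover have "a \<notin> set (d # q)"
    using p pcdq by (simp add: dpath_iff_successively)
  ultimately have "a \<noteq> b" by blast
  then show "\<exists>p. dp p \<and> hd p = a \<and> last p = b \<and> a \<noteq> b" using p by blast
next
  assume "\<exists>p. dp p \<and> hd p = a \<and> last p = b \<and> a \<noteq> b"
  then obtain p where p: "dp p" "hd p = a" "last p = b" "a \<noteq> b" by blast
  then have "2 \<le> length p"
    by (cases p rule: remdups_adj.cases) (auto simp: dpath_iff_successively)
  then show "ancestor a b" using p unfolding anc_def by blast
qed

lemma ancestor_sdist_less: "ancestor a b \<Longrightarrow> sdist a < sdist b"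
  unfolding ancestor_iff_dpath
  using sorted_wrt_hd dpath_sorted_sdist by (metis dpath_iff_successively last_in_set)

lemma ancestor_arc_trans:
  assumes "ancestor a b" "arc b c"
  shows "ancestor a c"
proof -
  obtain p where p: "dp p" "hd p = a" "last p = b"
    using assms(1) unfolding ancestor_iff_dpath by blast
  then have "dp (p @ [c])"
    using dpath_glue[OF p(1) arc_dpath[OF assms(2)]] by simp
  moreover have "hd (p @ [c]) = a"
    using p by (cases p) (auto simp: dpath_iff_successively)
  moreover have "a \<noteq> c"
    using ancestor_sdist_less[OF assms(1)] sdist_arc_less[OF assms(2)] by auto
  ultimately show ?thesis unfolding ancestor_iff_dpath by fastforce
qed

lemma dpath_from_source: "v \<in> VD \<Longrightarrow> \<exists>p. dp p \<and> hd p = s \<and> last p = v"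
proof -
  assume "v \<in> VD"
  then obtain p where sp: "SP p" and "v \<in> set p" unfolding DV_def by blast
  then obtain as bs where p: "p = as @ v # bs" by (meson split_list)
  have "dp (as @ [v])"
    using dpath_prefix[of "as @ [v]" bs] shortest_path_dpath[OF sp] p by simp
  moreover have "hd (as @ [v]) = s"
    using sp p by (cases as) (auto simp: shortest_path_def)
  ultimately show ?thesis by auto
qed

lemma dominator_on_dpath:
  assumes "dominates u v" "v \<in> VD"
  obtains p where "dp p" "hd p = s" "last p = v" "u \<in> set p" "u \<noteq> v"
  using assms dpath_from_source unfolding sdom_def by blast

lemma dominates_sdist_less: "dominates u v \<Longrightarrow> v \<in> VD \<Longrightarrow> sdist u < sdist v"
  by (metis dominator_on_dpath dpath_sorted_sdist sorted_wrt_last)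

lemma dominator_in_DV: "dominates u v \<Longrightarrow> v \<in> VD \<Longrightarrow> u \<in> VD"
  by (metis dominator_on_dpath dpath_iff_successively subsetD)

lemma dpath_from_dominator:
  assumes "dominates u v" "v \<in> VD"
  shows "\<exists>q. dp q \<and> hd q = u \<and> last q = v"
proof -
  obtain p where p: "dp p" "hd p = s" "last p = v" "u \<in> set p"
    using assms by (rule dominator_on_dpath)
  then obtain as bs where "p = as @ u # bs" by (meson split_list)
  then show ?thesis using p dpath_suffix[of as "u # bs"] by auto
qed

lemma farthest_dominator_dominated:
  assumes x: "x \<in> VD" and v: "dominates v x" and v_max: "\<And>u. dominates u x \<Longrightarrow> sdist u \<le> sdist v"
    and u: "dominates u x" "u \<noteq> v"
  shows "dominates u v"
  unfolding sdom_def
proof (intro conjI allI impI)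
  show "u \<noteq> v" by fact
  fix q assume q: "dp q \<and> hd q = s \<and> last q = v"
  show "u \<in> set q"
  proof (rule ccontr)
    assume "u \<notin> set q"
    obtain p where p: "dp p" "hd p = s" "last p = x" "v \<in> set p"
      using v x by (rule dominator_on_dpath)
    then obtain as bs where p_split: "p = as @ v # bs" by (meson split_list)
    have r: "dp (v # bs)" using dpath_suffix[of as "v # bs"] p(1) p_split by simp
    have "u \<notin> set (v # bs)"
      using sorted_wrt_hd[OF dpath_sorted_sdist[OF r], of u] v_max[OF u(1)] u(2) by fastforce
    moreover have "dp (q @ bs)" "hd (q @ bs) = s" "last (q @ bs) = x"
      using dpath_glue[of q "v # bs"] r q p p_split by (auto simp: dpath_iff_successively)
    ultimately show False
      using u(1) \<open>u \<notin> set q\<close> unfolding sdom_def by auto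
  qed
qed

text \<open>\<open>I x\<close> is the dominator of \<open>x\<close> farthest from \<open>s\<close>.\<close>
lemma idom_characterization:
  assumes x: "x \<in> VD" "x \<noteq> s"
  shows "dominates (I x) x \<and> (\<forall>u. dominates u x \<and> u \<noteq> I x \<longrightarrow> dominates u (I x))"
proof -
  let ?is_idom = "\<lambda>v. dominates v x \<and> (\<forall>u. dominates u x \<and> u \<noteq> v \<longrightarrow> dominates u v)"
  obtain p0 where p0: "dp p0" "hd p0 = s" "last p0 = x"
    using dpath_from_source[OF x(1)] by blast
  let ?Dom = "{u. dominates u x}"
  have "?Dom \<subseteq> set p0" using p0 unfolding sdom_def by blast
  then have "finite ?Dom" by (rule finite_subset) simp
  moreover have "s \<in> ?Dom"
    using x(2) unfolding sdom_def by (auto simp: dpath_iff_successively)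
  ultimately obtain v where v: "dominates v x" and v_max: "\<And>u. dominates u x \<Longrightarrow> sdist u \<le> sdist v"
    using Max_in[of "sdist ` ?Dom"] Max_ge[of "sdist ` ?Dom"] by fastforce
  then have "?is_idom v" using farthest_dominator_dominated[OF x(1)] by blast
  moreover have "v' = v" if "?is_idom v'" for v'
  proof (rule ccontr)
    assume "v' \<noteq> v"
    then have "dominates v' v" "dominates v v'" using that \<open>?is_idom v\<close> by blast+
    moreover have "v \<in> VD" "v' \<in> VD" using dominator_in_DV x(1) v that by blast+
    ultimately show False using dominates_sdist_less[of v' v] dominates_sdist_less[of v v'] by simp
  qed
  ultimately have "I x = v" unfolding idom_def by (rule the_equality)
  then show ?thesis using \<open>?is_idom v\<close> by simp
qed

definition disjoint_dpaths :: "'a \<Rightarrow> 'a \<Rightarrow> 'a \<Rightarrow> bool" where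
  "disjoint_dpaths a b x \<longleftrightarrow> (\<exists>P Q. dp P \<and> hd P = a \<and> last P = x \<and> dp Q \<and> hd Q = b \<and> last Q = x \<and>
     set P \<inter> set Q \<subseteq> {x})"

lemma disjoint_dpaths_reroute:
  assumes R: "dp (Ra @ [z])" "hd (Ra @ [z]) = a"
    and A: "dp (A1 @ z # A2)" "last (z # A2) = x"
    and B: "dp (y # B)" "last (y # B) = x"
    and AB: "set (A1 @ z # A2) \<inter> set B \<subseteq> {x}" "y \<notin> set (A1 @ z # A2)"
    and Ra: "set Ra \<inter> (set (A1 @ z # A2) \<union> set (y # B)) = {}"
  shows "disjoint_dpaths a y x"
proof -
  have "dp (Ra @ z # A2)"
    using dpath_glue[OF R(1) dpath_suffix[OF A(1)]] by simp
  moreover have "hd (Ra @ z # A2) = a" "last (Ra @ z # A2) = x"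
    using R(2) A(2) by (cases Ra; simp)+
  moreover have "set (Ra @ z # A2) \<inter> set (y # B) \<subseteq> {x}"
    using AB Ra by auto
  ultimately show ?thesis
    unfolding disjoint_dpaths_def using B by (intro exI[of _ "Ra @ z # A2"] exI[of _ "y # B"]) simp
qed

text \<open>Follow \<open>R\<close> until it first meets \<open>A\<close> or \<open>B\<close>, then continue along the path it met; \<open>y\<close> keeps
  the other one.\<close>
lemma disjoint_dpaths_fork:
  assumes R: "dp R" "hd R = a" "last R = x" "y \<notin> set R"
    and A: "dp (y # A)" "A \<noteq> []" "last A = x"
    and B: "dp (y # B)" "B \<noteq> []" "last B = x"
    and AB: "set A \<inter> set B \<subseteq> {x}"
  shows "disjoint_dpaths a y x"
proof -
  have "x \<in> set R" using R(1,3) by (metis dpath_iff_successively last_in_set)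
  moreover have "x \<in> set A" using A(2,3) last_in_set by blast
  ultimately obtain Ra z Rb where R_split: "R = Ra @ z # Rb" and z: "z \<in> set A \<union> set B"
    and Ra: "\<forall>v \<in> set Ra. v \<notin> set A \<union> set B"
    using split_list_first_prop[of R "\<lambda>v. v \<in> set A \<union> set B"] by blast
  have Rz: "dp (Ra @ [z])" "hd (Ra @ [z]) = a"
    using R(1,2) dpath_prefix[of "Ra @ [z]" Rb] R_split by (simp_all, cases Ra, simp_all)
  have y_notin: "y \<notin> set A" "y \<notin> set B" "y \<notin> set Ra"
    using A(1) B(1) R(4) R_split by (auto simp: dpath_iff_successively)
  have suffixes: "dp A" "dp B"
    using dpath_suffix[of "[y]"] A B by auto
  have Ra_disjoint: "set Ra \<inter> (set A \<union> set (y # B)) = {}" "set Ra \<inter> (set B \<union> set (y # A)) = {}"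
    using Ra y_notin(3) by auto
  from z show ?thesis
  proof
    assume "z \<in> set A"
    then obtain A1 A2 where A_split: "A = A1 @ z # A2" by (meson split_list)
    moreover have "last (z # A2) = x" using A(3) A_split by simp
    ultimately show ?thesis
      using disjoint_dpaths_reroute[OF Rz, of A1 A2 x y B] suffixes(1) B AB Ra_disjoint(1) y_notin(1)
      by simp
  next
    assume "z \<in> set B"
    then obtain B1 B2 where B_split: "B = B1 @ z # B2" by (meson split_list)
    moreover have "last (z # B2) = x" using B(3) B_split by simp
    ultimately show ?thesis
      using disjoint_dpaths_reroute[OF Rz, of B1 B2 x y A] suffixes(2) A AB Ra_disjoint(2) y_notin(2)
      by (simp add: Int_commute)
  qed
qed

context
  fixes x :: 'a
  assumes x: "x \<in> VD" "x \<noteq> s"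
begin

lemma idom_dominates: "dominates (I x) x"
  using idom_characterization[OF x] by blast

lemma dominates_idom: "dominates u x \<Longrightarrow> u \<noteq> I x \<Longrightarrow> dominates u (I x)"
  using idom_characterization[OF x] by blast

lemma idom_in_DV: "I x \<in> VD"
  using dominator_in_DV[OF idom_dominates x(1)] .

lemma dpath_avoiding:
  assumes "ancestor (I x) y" "ancestor y x"
  shows "\<exists>R. dp R \<and> hd R = I x \<and> last R = x \<and> y \<notin> set R"
proof (rule ccontr)
  assume "\<not> ?thesis"
  then have through_y: "y \<in> set R" if "dp R" "hd R = I x" "last R = x" for R
    using that by blast
  have far: "sdist (I x) < sdist y" "sdist y < sdist x"
    using assms ancestor_sdist_less by blast+
  have "dominates y x"
    unfolding sdom_def
  proof (intro conjI allI impI)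
    show "y \<noteq> x" using far by auto
    fix q assume q: "dp q \<and> hd q = s \<and> last q = x"
    then have "I x \<in> set q" using idom_dominates unfolding sdom_def by blast
    then obtain q1 q2 where q_split: "q = q1 @ I x # q2" by (meson split_list)
    then have "y \<in> set (I x # q2)"
      using through_y[of "I x # q2"] dpath_suffix[of q1 "I x # q2"] q by simp
    then show "y \<in> set q" using q_split by auto
  qed
  then have "dominates y (I x)" using dominates_idom far by auto
  then show False using dominates_sdist_less[OF _ idom_in_DV] far by fastforce
qed

lemma disjoint_dpaths_arc_step:
  assumes "disjoint_dpaths (I x) y' x" "arc y y'" "ancestor (I x) y" "ancestor y x"
  shows "disjoint_dpaths (I x) y x"
proof -
  obtain P Q where P: "dp P" "hd P = I x" "last P = x" and Q: "dp Q" "hd Q = y'" "last Q = x"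
    and PQ: "set P \<inter> set Q \<subseteq> {x}"
    using assms(1) unfolding disjoint_dpaths_def by blast
  have "Q \<noteq> []" using Q(1) by (simp add: dpath_iff_successively)
  have "dp (y # Q)"
    using dpath_glue[OF arc_dpath[OF assms(2)] Q(1)] Q(2) \<open>Q \<noteq> []\<close> by (cases Q) auto
  show ?thesis
  proof (cases "y \<in> set P")
    case False
    then show ?thesis
      unfolding disjoint_dpaths_def using P Q PQ \<open>dp (y # Q)\<close> \<open>Q \<noteq> []\<close>
      by (intro exI[of _ P] exI[of _ "y # Q"]) auto
  next
    case True
    then obtain P1 P2 where P_split: "P = P1 @ y # P2" by (meson split_list)
    have "y \<noteq> x" using ancestor_sdist_less[OF assms(4)] by auto
    then have "P2 \<noteq> []" "last P2 = x" using P(3) P_split by auto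
    moreover have "dp (y # P2)" using dpath_suffix[of P1 "y # P2"] P(1) P_split by simp
    moreover have "set Q \<inter> set P2 \<subseteq> {x}" using PQ P_split by auto
    moreover obtain R where "dp R" "hd R = I x" "last R = x" "y \<notin> set R"
      using dpath_avoiding[OF assms(3,4)] by blast
    ultimately show ?thesis
      using disjoint_dpaths_fork[of R "I x" x y Q P2] \<open>dp (y # Q)\<close> \<open>Q \<noteq> []\<close> Q(3) by blast
  qed
qed

lemma disjoint_dpaths_along_dpath:
  "dp p \<Longrightarrow> last p = x \<Longrightarrow> ancestor (I x) (hd p) \<Longrightarrow> disjoint_dpaths (I x) (hd p) x"
proof (induction p rule: induct_list012)
  case 1
  then show ?case by (simp add: dpath_iff_successively)
next
  case (2 y)
  obtain P where "dp P" "hd P = I x" "last P = x"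
    using dpath_from_dominator[OF idom_dominates x(1)] by blast
  moreover have "dp [x]" using x(1) by (simp add: dpath_iff_successively)
  ultimately show ?case
    using "2.prems"(2) unfolding disjoint_dpaths_def by (intro exI[of _ P] exI[of _ "[x]"]) auto
next
  case (3 y y' rest)
  have arc: "arc y y'" and "dp (y' # rest)"
    using "3.prems"(1) dpath_suffix[of "[y]" "y' # rest"] by (auto simp: dpath_iff_successively)
  moreover have "ancestor (I x) y'"
    using ancestor_arc_trans "3.prems"(3) arc by simp
  ultimately have "disjoint_dpaths (I x) y' x"
    using "3.IH"(2) "3.prems"(2) by simp
  moreover have "x \<in> set (y' # rest)" "y \<notin> set (y' # rest)"
    using "3.prems"(1,2) last_in_set[of "y' # rest"] by (auto simp: dpath_iff_successively)
  then have "ancestor y x"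
    unfolding ancestor_iff_dpath using "3.prems"(1,2) by (intro exI[of _ "y # y' # rest"]) auto
  ultimately show ?case
    using disjoint_dpaths_arc_step arc "3.prems"(3) by simp
qed

end

end

theorem lemma4:
  fixes V :: "'a set" and E :: "'a set set" and w :: "'a set \<Rightarrow> real" and s t x y :: 'a
  assumes "simple_graph V E" and "connected_graph V E"
    and "\<forall>e\<in>E. w e > 0"
    and "s \<in> V" and "t \<in> V"
    and "x \<in> DV V E w s t" and "x \<noteq> s"
    and "y \<in> Cset V E w s t x"
  shows "\<exists>P Q. dpath V E w s t P \<and> hd P = idom V E w s t x \<and> last P = x \<and>
               dpath V E w s t Q \<and> hd Q = y \<and> last Q = x \<and>
               internally_disjoint P Q"
proof -
  interpret shortest_path_dag V E w s t
    using assms(3) by unfold_locales blast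
  have y: "anc V E w s t (idom V E w s t x) y" "anc V E w s t y x"
    using assms(8) unfolding Cset_def by auto
  obtain p where "dpath V E w s t p" "hd p = y" "last p = x"
    using y(2) unfolding anc_def by blast
  then have "disjoint_dpaths (idom V E w s t x) y x"
    using disjoint_dpaths_along_dpath[OF assms(6,7)] y(1) by blast
  then obtain P Q where "dpath V E w s t P" "hd P = idom V E w s t x" "last P = x"
    "dpath V E w s t Q" "hd Q = y" "last Q = x" "set P \<inter> set Q \<subseteq> {x}"
    unfolding disjoint_dpaths_def by blast
  moreover have "internally_disjoint P Q"
    unfolding internally_disjoint_def using calculation by auto
  ultimately show ?thesis by blast
qed

end
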